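(* Let $p$ be a prime and let $\mathcal{A}$ be an $S$-ring over a cyclic $p$-group $G$ with $\mathrm{rad}(\mathcal{A})>e$. Then there exists an $\mathcal{A}$-section $U/L$ such that $\mathcal{A}$ is the proper $U/L$-wreath product and $\mathrm{rad}(\mathcal{A}_U)=e$.
   Context: Let $G$ be a finite group with identity $e$; for $X\subseteq G$ write $\underline{X}=\sum_{x\in X}x\in\mathbb{Z}G$. An $S$-ring over $G$ is a subring $\mathcal{A}\subseteq\mathbb{Z}G$ for which there is a partition $\mathcal{S}(\mathcal{A})$ of $G$ (the basic sets) with $\{e\}\in\mathcal{S}(\mathcal{A})$, $X^{-1}\in\mathcal{S}(\mathcal{A})$ whenever $X\in\mathcal{S}(\mathcal{A})$, and $\mathcal{A}=\mathrm{Span}_{\mathbb{Z}}\{\underline{X}:X\in\mathcal{S}(\mathcal{A})\}$. $X\subseteq G$ is an $\mathcal{A}$-set if $\underline X\in\mathcal{A}$; an $\mathcal{A}$-subgroup is a subgroup that is an $\mathcal{A}$-set; an $\mathcal{A}$-section is $U/L$ with $L\trianglelefteq U\leq G$ both $\mathcal{A}$-subgroups; $\mathcal{A}_U=\mathrm{Span}_{\mathbb{Z}}\{\underline X:X\in\mathcal{S}(\mathcal{A}),X\subseteq U\}$ is an $S$-ring over $U$. For $X\subseteq G$, $\mathrm{rad}(X)=\{g\in G:Xg=gX=X\}$. For an $S$-ring $\mathcal{B}$ over a cyclic group $H$, $\mathrm{rad}(\mathcal{B})=\mathrm{rad}(X)$ where $X$ is any basic set of $\mathcal{B}$ containing a generator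 of $H$ (this does not depend on the choice of $X$). $\mathcal{A}$ is the $U/L$-wreath product if $L\trianglelefteq G$ and $L\leq\mathrm{rad}(X)$ for every basic set $X\not\subseteq U$; it is proper if $L\neq\{e\}$ and $U\neq G$. *)

theory Defs
  imports "HOL-Algebra.Algebra"
begin

text \<open>Elements of the integral group ring ZG are represented as functions
  'a => int vanishing outside carrier G (finitely supported as G is finite).\<close>

definition set_elem :: "'a set \<Rightarrow> 'a \<Rightarrow> int" where
  "set_elem A = (\<lambda>g. if g \<in> A then 1 else 0)"

definition gr_mult :: "('a, 'b) monoid_scheme \<Rightarrow> ('a \<Rightarrow> int) \<Rightarrow> ('a \<Rightarrow> int) \<Rightarrow> 'a \<Rightarrow> int" where
  "gr_mult G f h = (\<lambda>z. if z \<in> carrier G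
      then (\<Sum>x\<in>carrier G. f x * h (inv\<^bsub>G\<^esub> x \<otimes>\<^bsub>G\<^esub> z)) else 0)"

definition zspan :: "'a set set \<Rightarrow> ('a \<Rightarrow> int) set" where
  "zspan S = {f. \<exists>c. f = (\<lambda>g. \<Sum>A\<in>S. c A * set_elem A g)}"

text \<open>S is the set of basic sets of an S-ring over G: a partition of G
  containing {e}, closed under inversion, whose Z-span is a subring of ZG
  (it is automatically an additive subgroup containing the identity set_elem {e}).\<close>
definition is_Sring :: "('a, 'b) monoid_scheme \<Rightarrow> 'a set set \<Rightarrow> bool" where
  "is_Sring G S \<longleftrightarrow>
     (\<forall>A\<in>S. A \<noteq> {} \<and> A \<subseteq> carrier G) \<and> \<Union>S = carrier G \<and>
     (\<forall>A\<in>S. \<forall>B\<in>S. A \<noteq> B \<longrightarrow> A \<inter> B = {}) \<and>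
     {\<one>\<^bsub>G\<^esub>} \<in> S \<and>
     (\<forall>A\<in>S. (\<lambda>x. inv\<^bsub>G\<^esub> x) ` A \<in> S) \<and>
     (\<forall>f\<in>zspan S. \<forall>h\<in>zspan S. gr_mult G f h \<in> zspan S)"

definition A_set :: "('a, 'b) monoid_scheme \<Rightarrow> 'a set set \<Rightarrow> 'a set \<Rightarrow> bool" where
  "A_set G S A \<longleftrightarrow> A \<subseteq> carrier G \<and> set_elem A \<in> zspan S"

definition A_subgroup :: "('a, 'b) monoid_scheme \<Rightarrow> 'a set set \<Rightarrow> 'a set \<Rightarrow> bool" where
  "A_subgroup G S H \<longleftrightarrow> subgroup H G \<and> A_set G S H"

definition A_section :: "('a, 'b) monoid_scheme \<Rightarrow> 'a set set \<Rightarrow> 'a set \<Rightarrow> 'a set \<Rightarrow> bool" where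
  "A_section G S U L \<longleftrightarrow> A_subgroup G S U \<and> A_subgroup G S L \<and> L \<subseteq> U \<and>
     L \<lhd> (G\<lparr>carrier := U\<rparr>)"

definition restr :: "'a set set \<Rightarrow> 'a set \<Rightarrow> 'a set set" where
  "restr S U = {A\<in>S. A \<subseteq> U}"

definition rad :: "('a, 'b) monoid_scheme \<Rightarrow> 'a set \<Rightarrow> 'a set \<Rightarrow> 'a set" where
  "rad G H A = {g\<in>H. A #>\<^bsub>G\<^esub> g = A \<and> g <#\<^bsub>G\<^esub> A = A}"

definition rad_Sring :: "('a, 'b) monoid_scheme \<Rightarrow> 'a set \<Rightarrow> 'a set set \<Rightarrow> 'a set" where
  "rad_Sring G H S = rad G H (SOME A. A \<in> S \<and> (\<exists>x\<in>A. generate G {x} = H))"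

definition wreath :: "('a, 'b) monoid_scheme \<Rightarrow> 'a set set \<Rightarrow> 'a set \<Rightarrow> 'a set \<Rightarrow> bool" where
  "wreath G S U L \<longleftrightarrow> L \<lhd> G \<and> (\<forall>A\<in>S. \<not> A \<subseteq> U \<longrightarrow> L \<subseteq> rad G (carrier G) A)"

definition proper_wreath :: "('a, 'b) monoid_scheme \<Rightarrow> 'a set set \<Rightarrow> 'a set \<Rightarrow> 'a set \<Rightarrow> bool" where
  "proper_wreath G S U L \<longleftrightarrow> wreath G S U L \<and> L \<noteq> {\<one>\<^bsub>G\<^esub>} \<and> U \<noteq> carrier G"

end

(*
  The basic sets of an S-ring over a cyclic p-group are permuted by the power maps
  x \<mapsto> x^m with m prime to p (Schur's theorem on multipliers, proved through the
  congruence Y^q = Y^(q) modulo q in the group ring). Two generators of a subgroup H differ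
  by such a power, so all basic sets of A_H containing a generator of H have the same
  stabilizer, whose intersection with H is R = rad(A_H). Consequently no element of R, and
  no element of a basic set of A_H that is not R-invariant, generates H. As the subgroups
  form a chain, these elements generate a proper A-subgroup U of H, and every basic set of
  A_H outside U is R-invariant: A_H is the U/R-wreath product. If rad(A_U) is nontrivial,
  the argument is repeated inside U, keeping the smaller of the two radicals.
*)

theory Submission
  imports Defs
begin

lemma rotate_mult_fixed: "rotate d xs = xs \<Longrightarrow> rotate (d * u) xs = xs"
  by (induction u) (simp_all add: rotate_rotate[symmetric])

lemma rotate_coprime_fixed:
  assumes fixed: "rotate d xs = xs" and coprime: "coprime d (length xs)"
  shows "rotate1 xs = xs"
proof (cases "d = 0")
  case True
  then show ?thesis
    using coprime by simp
next
  case False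
  then obtain u v where uv: "d * u = length xs * v + 1"
    using bezout_nat[of d "length xs"] coprime by auto
  have "rotate1 xs = rotate (length xs * v + 1) xs"
    by (simp add: rotate_conv_mod[of "length xs * v + 1"] rotate_conv_mod[of 1])
  also have "\<dots> = xs"
    using rotate_mult_fixed[OF fixed] uv by metis
  finally show ?thesis .
qed

definition rotations :: "'x list \<Rightarrow> 'x list set" where
  "rotations xs = range (\<lambda>n. rotate n xs)"

lemma rotations_rotate1: "rotations (rotate1 xs) = rotations xs"
proof
  have shift: "rotate n (rotate1 xs) = rotate (Suc n) xs" for n
    by (simp add: rotate1_rotate_swap)
  then show "rotations (rotate1 xs) \<subseteq> rotations xs"
    unfolding rotations_def by (metis (no_types) image_subset_iff rangeI)
  have "rotate n xs = rotate (n + length xs - 1) (rotate1 xs)" for n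
  proof (cases "xs = []")
    case False
    then have "rotate (n + length xs - 1) (rotate1 xs) = rotate (n + length xs) xs"
      unfolding shift by (simp add: Suc_diff_1)
    then show ?thesis
      by (simp add: rotate_conv_mod[of "n + length xs"] rotate_conv_mod[of n])
  qed simp
  then show "rotations xs \<subseteq> rotations (rotate1 xs)"
    unfolding rotations_def by blast
qed

lemma rotations_rotate: "rotations (rotate n xs) = rotations xs"
  by (induction n) (simp_all add: rotations_rotate1)

lemma rotations_eq:
  assumes "ys \<in> rotations xs"
  shows "rotations ys = rotations xs"
proof -
  obtain n where "ys = rotate n xs"
    using assms unfolding rotations_def by blast
  then show ?thesis
    by (simp add: rotations_rotate)
qed

lemma card_rotations_prime:
  assumes prime: "Factorial_Ring.prime (length xs)" and not_fixed: "rotate1 xs \<noteq> xs"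
  shows "card (rotations xs) = length xs"
proof -
  let ?q = "length xs"
  have q: "?q > 0"
    using prime prime_gt_0_nat by blast
  have "rotations xs = (\<lambda>n. rotate n xs) ` {..<?q}"
    unfolding rotations_def using q by (auto simp: image_iff intro: rotate_conv_mod)
  moreover have "inj_on (\<lambda>n. rotate n xs) {..<?q}"
  proof (rule inj_onI, rule ccontr)
    fix a b assume "a \<in> {..<?q}" "b \<in> {..<?q}" "rotate a xs = rotate b xs" "a \<noteq> b"
    then obtain a b where ab: "a < b" "b < ?q" "rotate a xs = rotate b xs"
      by (metis lessThan_iff linorder_neqE_nat)
    define ys where "ys = rotate a xs"
    have "rotate (b - a) ys = rotate b xs"
      unfolding ys_def rotate_rotate using ab(1) by simp
    then have "rotate (b - a) ys = ys"
      using ab(3) unfolding ys_def by simp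
    moreover have "\<not> ?q dvd b - a"
      using ab by (auto dest: dvd_imp_le)
    then have "coprime (b - a) (length ys)"
      using prime unfolding ys_def by (simp add: prime_imp_coprime coprime_commute)
    ultimately have "rotate1 ys = ys"
      by (rule rotate_coprime_fixed)
    moreover have "rotate (?q - a) ys = rotate ?q xs"
      unfolding ys_def rotate_rotate using ab(1,2) by simp
    then have "xs = rotate (?q - a) ys"
      by simp
    ultimately show False
      using not_fixed by (metis rotate1_rotate_swap)
  qed
  ultimately show ?thesis
    by (simp add: card_image)
qed

text \<open>Necklace argument: by primality of q, every rotation orbit in T has exactly q elements.\<close>

lemma prime_dvd_card_rotation_closed:
  assumes prime: "Factorial_Ring.prime q" and "finite T"
    and length: "\<And>xs. xs \<in> T \<Longrightarrow> length xs = q"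
    and closed: "\<And>xs. xs \<in> T \<Longrightarrow> rotate1 xs \<in> T"
    and not_fixed: "\<And>xs. xs \<in> T \<Longrightarrow> rotate1 xs \<noteq> xs"
  shows "q dvd card T"
proof -
  have "rotate n xs \<in> T" if "xs \<in> T" for xs n
    using that closed by (induction n) simp_all
  then have "rotations xs \<subseteq> T" if "xs \<in> T" for xs
    using that unfolding rotations_def by blast
  moreover have "xs \<in> rotations xs" for xs :: "'a list"
    unfolding rotations_def by (metis rangeI rotate0 id_apply)
  ultimately have "\<Union> (rotations ` T) = T"
    by blast
  moreover have "q * card (rotations ` T) = card (\<Union> (rotations ` T))"
  proof (rule card_partition)
    show "finite (rotations ` T)" "finite (\<Union> (rotations ` T))"
      using \<open>finite T\<close> calculation by simp_all
    show "\<And>c. c \<in> rotations ` T \<Longrightarrow> card c = q"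
      using card_rotations_prime prime length not_fixed by (metis imageE)
    show "\<And>c d. c \<in> rotations ` T \<Longrightarrow> d \<in> rotations ` T \<Longrightarrow> c \<noteq> d \<Longrightarrow> c \<inter> d = {}"
      using rotations_eq by blast
  qed
  ultimately show ?thesis
    by (metis dvd_triv_left)
qed

lemma card_mod_prime_rotation_fixed_points:
  assumes prime: "Factorial_Ring.prime q" and "finite T"
    and length: "\<And>xs. xs \<in> T \<Longrightarrow> length xs = q"
    and closed: "\<And>xs. xs \<in> T \<Longrightarrow> rotate1 xs \<in> T"
  shows "card T mod q = card {xs\<in>T. rotate1 xs = xs} mod q"
proof -
  let ?F = "{xs\<in>T. rotate1 xs = xs}"
  have "q dvd card (T - ?F)"
  proof (rule prime_dvd_card_rotation_closed[OF prime])
    fix xs assume xs: "xs \<in> T - ?F"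
    then have "rotate1 (rotate1 xs) \<noteq> rotate1 xs"
      using inj_rotate1 by (auto dest: injD)
    then show "rotate1 xs \<in> T - ?F"
      using xs closed by simp
  qed (use \<open>finite T\<close> length in auto)
  then obtain c where "card (T - ?F) = q * c"
    by (elim dvdE)
  moreover have "card T = card ?F + card (T - ?F)"
    using \<open>finite T\<close> by (simp add: card_Diff_subset card_mono)
  ultimately show ?thesis
    by simp
qed

lemma rotate1_fixed_replicate: "rotate1 xs = xs \<Longrightarrow> xs = replicate (length xs) (hd xs)"
  using rotate1_fixpoint_card[of xs]
  by (metis card_1_singletonE empty_iff hd_in_set insertE list.set(1) replicate_length_same)

context group
begin

lemma subgroup_nat_pow_closed: "subgroup H G \<Longrightarrow> h \<in> H \<Longrightarrow> h [^] (n::nat) \<in> H"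
  using subgroup_int_pow_closed[of H h "int n"] by (simp add: int_pow_int)

lemma pow_inverse_exponent:
  assumes "finite (carrier G)" "0 < m" "coprime m (order G)"
  obtains u where "0 < u" "coprime u (order G)" "\<And>x. x \<in> carrier G \<Longrightarrow> (x [^] m) [^] u = x"
proof -
  obtain u v where uv: "m * u = order G * v + 1"
    using bezout_nat[of m "order G"] assms(2,3) by auto
  have "(x [^] m) [^] u = x" if x: "x \<in> carrier G" for x
  proof -
    have "(x [^] m) [^] u = x [^] (order G * v) \<otimes> x [^] (1::nat)"
      using x by (simp only: nat_pow_pow uv nat_pow_mult)
    also have "x [^] (order G * v) = \<one>"
      using x by (simp add: nat_pow_pow[symmetric] pow_order_eq_1)
    finally show ?thesis
      using x by simp
  qed
  moreover have "coprime u (order G)"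
  proof (rule coprimeI)
    fix d assume "d dvd u" "d dvd order G"
    then have "d dvd m * u" "d dvd order G * v"
      by simp_all
    then have "d dvd 1"
      using uv by (metis dvd_add_right_iff)
    then show "is_unit d"
      by simp
  qed
  moreover have "0 < u"
    using uv by (cases u) simp_all
  ultimately show ?thesis
    using that by blast
qed

lemma pow_eq_imp_eq_coprime:
  assumes "finite (carrier G)" "0 < q" "coprime q (order G)"
    and "a \<in> carrier G" "b \<in> carrier G" "a [^] q = b [^] q"
  shows "a = b"
  using pow_inverse_exponent[OF assms(1-3)] assms(4-6) by metis

lemma generate_pow_mono:
  assumes "a \<in> carrier G" "d dvd (e::nat)"
  shows "generate G {a [^] e} \<subseteq> generate G {a [^] d}"
proof -
  obtain c where "e = d * c"
    using assms(2) by blast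
  then have "a [^] e = (a [^] d) [^] c"
    using assms(1) by (simp add: nat_pow_pow)
  then have "a [^] e \<in> generate G {a [^] d}"
    using subgroup_nat_pow_closed[OF generate_is_subgroup generate.incl] assms(1) by auto
  then show ?thesis
    using generate_subgroup_incl[OF _ generate_is_subgroup] assms(1) by auto
qed

lemma generate_pow_gcd:
  assumes "finite (carrier G)" "a \<in> carrier G"
  shows "generate G {a [^] i} = generate G {a [^] gcd (order G) (i::nat)}"
proof
  show "generate G {a [^] i} \<subseteq> generate G {a [^] gcd (order G) i}"
    by (rule generate_pow_mono[OF assms(2) gcd_dvd2])
  show "generate G {a [^] gcd (order G) i} \<subseteq> generate G {a [^] i}"
  proof (cases "i = 0")
    case False
    obtain u v where uv: "i * u = order G * v + gcd i (order G)"
      using bezout_nat[OF False] by blast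
    have "(a [^] i) [^] u = (a [^] order G) [^] v \<otimes> a [^] gcd (order G) i"
      using assms(2) uv by (simp add: nat_pow_pow nat_pow_mult gcd.commute)
    then have "a [^] gcd (order G) i = (a [^] i) [^] u"
      using assms(2) pow_order_eq_1 by simp
    then have "a [^] gcd (order G) i \<in> generate G {a [^] i}"
      using subgroup_nat_pow_closed[OF generate_is_subgroup generate.incl] assms(2) by auto
    then show ?thesis
      using generate_subgroup_incl[OF _ generate_is_subgroup] assms(2) by auto
  qed (use assms in \<open>simp add: pow_order_eq_1\<close>)
qed

lemma set_multI: "w \<in> W \<Longrightarrow> c \<in> M \<Longrightarrow> w \<otimes> c \<in> W <#> M"
  unfolding set_mult_def by blast

lemma set_multE:
  assumes "x \<in> W <#> M"
  obtains w c where "x = w \<otimes> c" "w \<in> W" "c \<in> M"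
  using assms unfolding set_mult_def by blast

definition set_mult_power :: "'a set \<Rightarrow> nat \<Rightarrow> 'a set" where
  "set_mult_power W n = ((\<lambda>M. W <#> M) ^^ n) {\<one>}"

lemma set_mult_power_0 [simp]: "set_mult_power W 0 = {\<one>}"
  and set_mult_power_Suc [simp]: "set_mult_power W (Suc n) = W <#> set_mult_power W n"
  unfolding set_mult_power_def by simp_all

lemma set_mult_power_subgroup:
  assumes K: "subgroup K G" and W: "W \<subseteq> K"
  shows "set_mult_power W n \<subseteq> K"
proof (induction n)
  case 0
  show ?case
    using subgroup.one_closed[OF K] by simp
next
  case (Suc n)
  show ?case
  proof
    fix x assume "x \<in> set_mult_power W (Suc n)"
    then obtain w c where "x = w \<otimes> c" "w \<in> W" "c \<in> set_mult_power W n"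
      by (auto elim: set_multE)
    then show "x \<in> K"
      using Suc W subgroup.m_closed[OF K] by auto
  qed
qed

lemma set_mult_power_mult:
  assumes W: "W \<subseteq> carrier G" and "a \<in> set_mult_power W i" "b \<in> set_mult_power W j"
  shows "a \<otimes> b \<in> set_mult_power W (i + j)"
  using assms(2)
proof (induction i arbitrary: a)
  case 0
  have "b \<in> carrier G"
    using set_mult_power_subgroup[OF subgroup_self W] assms(3) by blast
  then show ?case
    using 0 assms(3) by simp
next
  case (Suc i)
  then obtain w c where wc: "a = w \<otimes> c" "w \<in> W" "c \<in> set_mult_power W i"
    by (auto elim: set_multE)
  have "w \<in> carrier G" "c \<in> carrier G" "b \<in> carrier G"
    using wc(2,3) assms(3) W set_mult_power_subgroup[OF subgroup_self W] by auto
  then have "a \<otimes> b = w \<otimes> (c \<otimes> b)"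
    using wc(1) by (simp add: m_assoc)
  moreover have "w \<otimes> (c \<otimes> b) \<in> set_mult_power W (Suc (i + j))"
    using set_multI[OF wc(2) Suc.IH[OF wc(3)]] by simp
  ultimately show ?case
    by simp
qed

lemma set_mult_power_1: "W \<subseteq> carrier G \<Longrightarrow> set_mult_power W 1 = W"
  by (auto simp: set_mult_def) (metis r_one subsetD)

lemma generate_eq_Union_set_mult_power:
  assumes V: "V \<subseteq> carrier G"
  shows "generate G V = (\<Union>n. set_mult_power (V \<union> (\<lambda>x. inv x) ` V) n)"
    (is "_ = (\<Union>n. set_mult_power ?W n)")
proof
  have W: "?W \<subseteq> carrier G"
    using V by auto
  show "generate G V \<subseteq> (\<Union>n. set_mult_power ?W n)"
  proof
    fix x assume "x \<in> generate G V"
    then show "x \<in> (\<Union>n. set_mult_power ?W n)"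
    proof (induction x rule: generate.induct)
      case one
      have "\<one> \<in> set_mult_power ?W 0"
        by simp
      then show ?case
        by blast
    next
      case (incl h)
      then have "h \<in> set_mult_power ?W 1"
        using set_mult_power_1[OF W] by simp
      then show ?case
        by blast
    next
      case (inv h)
      then have "inv h \<in> set_mult_power ?W 1"
        using set_mult_power_1[OF W] by simp
      then show ?case
        by blast
    next
      case (eng a b)
      then show ?case
        using set_mult_power_mult[OF W] by blast
    qed
  qed
  have "?W \<subseteq> generate G V"
    by (auto intro: generate.incl generate.inv)
  then show "(\<Union>n. set_mult_power ?W n) \<subseteq> generate G V"
    using set_mult_power_subgroup[OF generate_is_subgroup[OF V]] by blast
qed

end

lemma sum_set_elem_eq_card:
  "finite Y \<Longrightarrow> (\<Sum>x\<in>Y. set_elem Z (f x)) = int (card {x\<in>Y. f x \<in> Z})"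
  by (simp add: set_elem_def sum.If_cases Int_def)

locale S_ring = group G for G :: "('a, 'b) monoid_scheme" (structure) +
  fixes S :: "'a set set"
  assumes finite_carrier: "finite (carrier G)" and is_Sring: "is_Sring G S"
begin

lemma basic_set_subset: "A \<in> S \<Longrightarrow> A \<subseteq> carrier G"
  and basic_set_nonempty: "A \<in> S \<Longrightarrow> A \<noteq> {}"
  and basic_sets_disjoint: "A \<in> S \<Longrightarrow> B \<in> S \<Longrightarrow> x \<in> A \<Longrightarrow> x \<in> B \<Longrightarrow> A = B"
  and basic_set_one: "{\<one>} \<in> S"
  and basic_set_inv: "A \<in> S \<Longrightarrow> (\<lambda>x. inv x) ` A \<in> S"
  and zspan_mult_closed: "f \<in> zspan S \<Longrightarrow> h \<in> zspan S \<Longrightarrow> gr_mult G f h \<in> zspan S"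
  using is_Sring unfolding is_Sring_def by blast+

lemma basic_set_cover: "x \<in> carrier G \<Longrightarrow> \<exists>A\<in>S. x \<in> A"
  using is_Sring unfolding is_Sring_def by blast

lemma finite_basic_sets: "finite S"
  using finite_subset[of S "Pow (carrier G)"] basic_set_subset finite_carrier by blast

lemma sum_basic_sets_set_elem:
  assumes "B \<in> S" "x \<in> B"
  shows "(\<Sum>A\<in>S. c A * set_elem A x) = c B"
proof -
  have "(\<Sum>A\<in>S. c A * set_elem A x) = (\<Sum>A\<in>S. if A = B then c A else 0)"
    using assms basic_sets_disjoint by (intro sum.cong) (auto simp: set_elem_def)
  then show ?thesis
    using assms(1) finite_basic_sets by simp
qed

lemma zspan_iff:
  "f \<in> zspan S \<longleftrightarrow> (\<forall>x. x \<notin> carrier G \<longrightarrow> f x = 0) \<and> (\<forall>A\<in>S. \<forall>x\<in>A. \<forall>y\<in>A. f x = f y)"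
proof
  assume "f \<in> zspan S"
  then obtain c where c: "f = (\<lambda>g. \<Sum>A\<in>S. c A * set_elem A g)"
    unfolding zspan_def by blast
  have "f x = 0" if "x \<notin> carrier G" for x
    using that basic_set_subset unfolding c by (intro sum.neutral) (auto simp: set_elem_def)
  then show "(\<forall>x. x \<notin> carrier G \<longrightarrow> f x = 0) \<and> (\<forall>A\<in>S. \<forall>x\<in>A. \<forall>y\<in>A. f x = f y)"
    unfolding c using sum_basic_sets_set_elem by simp
next
  assume f: "(\<forall>x. x \<notin> carrier G \<longrightarrow> f x = 0) \<and> (\<forall>A\<in>S. \<forall>x\<in>A. \<forall>y\<in>A. f x = f y)"
  define c where "c A = f (SOME x. x \<in> A)" for A
  have "f g = (\<Sum>A\<in>S. c A * set_elem A g)" for g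
  proof (cases "g \<in> carrier G")
    case True
    then obtain B where B: "B \<in> S" "g \<in> B"
      using basic_set_cover by blast
    then have "c B = f g"
      unfolding c_def using f by (metis someI)
    then show ?thesis
      using sum_basic_sets_set_elem[OF B] by simp
  next
    case False
    then have "(\<Sum>A\<in>S. c A * set_elem A g) = 0"
      using basic_set_subset by (intro sum.neutral) (auto simp: set_elem_def)
    then show ?thesis
      using f False by simp
  qed
  then show "f \<in> zspan S"
    unfolding zspan_def by blast
qed

lemma A_set_iff: "A_set G S Y \<longleftrightarrow> Y \<subseteq> carrier G \<and> (\<forall>A\<in>S. A \<subseteq> Y \<or> A \<inter> Y = {})"
proof -
  have "set_elem Y x = set_elem Y y \<longleftrightarrow> (x \<in> Y \<longleftrightarrow> y \<in> Y)" for x y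
    by (simp add: set_elem_def)
  then have const: "(\<forall>x\<in>A. \<forall>y\<in>A. set_elem Y x = set_elem Y y) \<longleftrightarrow> A \<subseteq> Y \<or> A \<inter> Y = {}" for A
    by blast
  have support: "(\<forall>x. x \<notin> carrier G \<longrightarrow> set_elem Y x = 0) \<longleftrightarrow> Y \<subseteq> carrier G"
    by (auto simp: set_elem_def)
  show ?thesis
    unfolding A_set_def zspan_iff const support by blast
qed

lemma A_set_basic_set: "A \<in> S \<Longrightarrow> A_set G S A"
  unfolding A_set_iff using basic_set_subset basic_sets_disjoint by blast

lemma basic_set_subset_A_set: "A_set G S Y \<Longrightarrow> A \<in> S \<Longrightarrow> x \<in> A \<Longrightarrow> x \<in> Y \<Longrightarrow> A \<subseteq> Y"
  unfolding A_set_iff by blast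

lemma A_set_carrier: "A_set G S (carrier G)"
  unfolding A_set_iff using basic_set_subset by blast

lemma A_set_Int: "A_set G S Y \<Longrightarrow> A_set G S Z \<Longrightarrow> A_set G S (Y \<inter> Z)"
  unfolding A_set_iff by blast

lemma A_set_Un: "A_set G S Y \<Longrightarrow> A_set G S Z \<Longrightarrow> A_set G S (Y \<union> Z)"
  unfolding A_set_iff by blast

lemma A_set_Union: "(\<And>Y. Y \<in> F \<Longrightarrow> A_set G S Y) \<Longrightarrow> A_set G S (\<Union>F)"
  unfolding A_set_iff by blast

lemma A_set_level_set:
  assumes f: "f \<in> zspan S" and M: "M \<subseteq> carrier G"
    and level: "\<And>z. z \<in> carrier G \<Longrightarrow> z \<in> M \<longleftrightarrow> P (f z)"
  shows "A_set G S M"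
  unfolding A_set_iff
proof (intro conjI ballI)
  fix A assume A: "A \<in> S"
  then have "P (f x) \<longleftrightarrow> P (f y)" if "x \<in> A" "y \<in> A" for x y
    using f that unfolding zspan_iff by metis
  then have "x \<in> M \<longleftrightarrow> y \<in> M" if "x \<in> A" "y \<in> A" for x y
    using that level basic_set_subset[OF A] by blast
  then show "A \<subseteq> M \<or> A \<inter> M = {}"
    by blast
qed (rule M)

lemma A_set_inv_image:
  assumes "A_set G S Y"
  shows "A_set G S ((\<lambda>x. inv x) ` Y)"
  unfolding A_set_iff
proof (intro conjI ballI)
  have Y: "Y \<subseteq> carrier G" and split: "\<forall>A\<in>S. A \<subseteq> Y \<or> A \<inter> Y = {}"
    using assms unfolding A_set_iff by auto
  then show "(\<lambda>x. inv x) ` Y \<subseteq> carrier G"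
    by auto
  fix A assume A: "A \<in> S"
  have mem: "x \<in> (\<lambda>x. inv x) ` Y \<longleftrightarrow> inv x \<in> Y" if "x \<in> A" for x
  proof
    assume "x \<in> (\<lambda>x. inv x) ` Y"
    then show "inv x \<in> Y"
      using Y by auto
  next
    assume "inv x \<in> Y"
    moreover have "x = inv (inv x)"
      using that basic_set_subset[OF A] by auto
    ultimately show "x \<in> (\<lambda>x. inv x) ` Y"
      by (rule rev_image_eqI)
  qed
  have "(\<lambda>x. inv x) ` A \<subseteq> Y \<or> (\<lambda>x. inv x) ` A \<inter> Y = {}"
    using split basic_set_inv[OF A] by simp
  then show "A \<subseteq> (\<lambda>x. inv x) ` Y \<or> A \<inter> (\<lambda>x. inv x) ` Y = {}"
    using mem by (auto simp: image_subset_iff disjoint_iff)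
qed

lemma gr_mult_set_elem:
  assumes "Y \<subseteq> carrier G" "z \<in> carrier G"
  shows "gr_mult G (set_elem Y) h z = (\<Sum>x\<in>Y. h (inv x \<otimes> z))"
proof -
  have "gr_mult G (set_elem Y) h z = (\<Sum>x\<in>carrier G. if x \<in> Y then h (inv x \<otimes> z) else 0)"
    unfolding gr_mult_def set_elem_def using assms(2) by (auto intro!: sum.cong)
  also have "\<dots> = (\<Sum>x\<in>Y. h (inv x \<otimes> z))"
    using assms(1) finite_carrier by (simp add: sum.If_cases Int_absorb1)
  finally show ?thesis .
qed

lemma gr_mult_set_elems:
  assumes "Y \<subseteq> carrier G" "z \<in> carrier G"
  shows "gr_mult G (set_elem Y) (set_elem Z) z = int (card {x\<in>Y. inv x \<otimes> z \<in> Z})"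
  using gr_mult_set_elem[OF assms] sum_set_elem_eq_card finite_subset[OF assms(1) finite_carrier]
  by simp

lemma mem_set_mult_iff:
  assumes "Y \<subseteq> carrier G" "Z \<subseteq> carrier G" "w \<in> carrier G"
  shows "w \<in> Y <#> Z \<longleftrightarrow> {x\<in>Y. inv x \<otimes> w \<in> Z} \<noteq> {}"
proof
  assume "w \<in> Y <#> Z"
  then obtain y z where yz: "w = y \<otimes> z" "y \<in> Y" "z \<in> Z"
    by (rule set_multE)
  moreover have "y \<in> carrier G" "z \<in> carrier G"
    using yz assms by auto
  ultimately have "inv y \<otimes> w = z"
    by (simp add: m_assoc[symmetric])
  then show "{x\<in>Y. inv x \<otimes> w \<in> Z} \<noteq> {}"
    using yz by auto
next
  assume "{x\<in>Y. inv x \<otimes> w \<in> Z} \<noteq> {}"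
  then obtain y where y: "y \<in> Y" "inv y \<otimes> w \<in> Z"
    by blast
  moreover have "w = y \<otimes> (inv y \<otimes> w)"
    using y(1) assms by (auto simp: m_assoc[symmetric])
  ultimately show "w \<in> Y <#> Z"
    using set_multI by metis
qed

lemma A_set_set_mult:
  assumes Y: "A_set G S Y" and Z: "A_set G S Z"
  shows "A_set G S (Y <#> Z)"
proof -
  have Yc: "Y \<subseteq> carrier G" and Zc: "Z \<subseteq> carrier G"
    using Y Z unfolding A_set_def by auto
  have "finite {x\<in>Y. inv x \<otimes> w \<in> Z}" for w
    using Yc by (auto intro: finite_subset[OF _ finite_carrier])
  then have level: "w \<in> Y <#> Z \<longleftrightarrow> gr_mult G (set_elem Y) (set_elem Z) w \<noteq> 0"
    if "w \<in> carrier G" for w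
    using that mem_set_mult_iff[OF Yc Zc that] gr_mult_set_elems[OF Yc that] by simp
  have "gr_mult G (set_elem Y) (set_elem Z) \<in> zspan S"
    using Y Z zspan_mult_closed unfolding A_set_def by blast
  from A_set_level_set[OF this set_mult_closed[OF Yc Zc] level] show ?thesis .
qed

definition stab :: "'a set \<Rightarrow> 'a set" where
  "stab Q = {z \<in> carrier G. \<forall>x\<in>Q. x \<otimes> z \<in> Q}"

lemma stab_image_eq:
  assumes Q: "Q \<subseteq> carrier G" and z: "z \<in> stab Q"
  shows "(\<lambda>x. x \<otimes> z) ` Q = Q"
proof -
  have "z \<in> carrier G"
    using z unfolding stab_def by blast
  then have "inj_on (\<lambda>x. x \<otimes> z) Q"
    using Q by (intro inj_onI) (meson r_cancel subsetD)
  then have "card ((\<lambda>x. x \<otimes> z) ` Q) = card Q"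
    by (rule card_image)
  moreover have "(\<lambda>x. x \<otimes> z) ` Q \<subseteq> Q"
    using z unfolding stab_def by auto
  ultimately show ?thesis
    using card_subset_eq finite_subset[OF Q finite_carrier] by blast
qed

lemma r_coset_eq_iff_stab:
  assumes "Q \<subseteq> carrier G" "z \<in> carrier G"
  shows "Q #> z = Q \<longleftrightarrow> z \<in> stab Q"
proof -
  have "Q #> z = (\<lambda>x. x \<otimes> z) ` Q"
    unfolding r_coset_def by auto
  then show ?thesis
    using assms stab_image_eq unfolding stab_def by auto
qed

lemma stab_subgroup:
  assumes Q: "Q \<subseteq> carrier G"
  shows "subgroup (stab Q) G"
proof (rule subgroupI)
  have "\<one> \<in> stab Q"
    using Q unfolding stab_def by auto
  then show "stab Q \<subseteq> carrier G" "stab Q \<noteq> {}"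
    unfolding stab_def by auto
next
  fix a b assume "a \<in> stab Q" "b \<in> stab Q"
  then have a: "a \<in> carrier G" "Q #> a = Q" and b: "b \<in> carrier G" "Q #> b = Q"
    using r_coset_eq_iff_stab[OF Q] unfolding stab_def by auto
  have "Q #> inv a = (Q #> a) #> inv a"
    using a by simp
  also have "\<dots> = Q #> (a \<otimes> inv a)"
    using a Q by (intro coset_mult_assoc) auto
  also have "\<dots> = Q"
    using a Q by simp
  finally show "inv a \<in> stab Q"
    using r_coset_eq_iff_stab[OF Q] a by simp
  have "Q #> (a \<otimes> b) = Q"
    using a b Q by (simp add: coset_mult_assoc[symmetric])
  then show "a \<otimes> b \<in> stab Q"
    using r_coset_eq_iff_stab[OF Q] a b by simp
qed

text \<open>The stabilizer of Q is where the coefficient of Q^{-1}Q attains its maximum |Q|.\<close>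

lemma A_set_stab:
  assumes Q: "A_set G S Q"
  shows "A_set G S (stab Q)"
proof -
  have Qc: "Q \<subseteq> carrier G" and finite_Q: "finite Q"
    using Q finite_subset[OF _ finite_carrier] unfolding A_set_def by auto
  define f where "f = gr_mult G (set_elem ((\<lambda>x. inv x) ` Q)) (set_elem Q)"
  have "f \<in> zspan S"
    unfolding f_def using zspan_mult_closed Q A_set_inv_image[OF Q] unfolding A_set_def by blast
  have "inj_on (\<lambda>x. inv x) Q"
    using Qc by (intro inj_onI) (metis inv_inv subsetD)
  then have f_eq: "f z = int (card {x\<in>Q. x \<otimes> z \<in> Q})" if "z \<in> carrier G" for z
    using that Qc unfolding f_def
    by (simp add: gr_mult_set_elem sum.reindex sum_set_elem_eq_card[OF finite_Q] subset_eq cong: sum.cong)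
  have level: "z \<in> stab Q \<longleftrightarrow> f z = int (card Q)" if "z \<in> carrier G" for z
  proof -
    have "(\<forall>x\<in>Q. x \<otimes> z \<in> Q) \<longleftrightarrow> card {x\<in>Q. x \<otimes> z \<in> Q} = card Q"
    proof
      assume "card {x\<in>Q. x \<otimes> z \<in> Q} = card Q"
      then have "{x\<in>Q. x \<otimes> z \<in> Q} = Q"
        by (intro card_subset_eq[OF finite_Q]) auto
      then show "\<forall>x\<in>Q. x \<otimes> z \<in> Q"
        by blast
    next
      assume "\<forall>x\<in>Q. x \<otimes> z \<in> Q"
      then have "{x\<in>Q. x \<otimes> z \<in> Q} = Q"
        by blast
      then show "card {x\<in>Q. x \<otimes> z \<in> Q} = card Q"
        by simp
    qed
    then show ?thesis
      unfolding stab_def using that f_eq by simp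
  qed
  have "stab Q \<subseteq> carrier G"
    unfolding stab_def by blast
  from A_set_level_set[OF \<open>f \<in> zspan S\<close> this level] show ?thesis .
qed

lemma A_set_set_mult_power: "A_set G S W \<Longrightarrow> A_set G S (set_mult_power W n)"
  using A_set_basic_set[OF basic_set_one] A_set_set_mult by (induction n) simp_all

lemma A_set_generate:
  assumes V: "A_set G S V"
  shows "A_set G S (generate G V)"
proof -
  have "A_set G S (V \<union> (\<lambda>x. inv x) ` V)"
    using A_set_Un[OF V A_set_inv_image[OF V]] .
  then have "A_set G S (\<Union>n. set_mult_power (V \<union> (\<lambda>x. inv x) ` V) n)"
    by (intro A_set_Union) (auto intro: A_set_set_mult_power)
  then show ?thesis
    using generate_eq_Union_set_mult_power V unfolding A_set_def by simp
qed

definition factorizations :: "'a set \<Rightarrow> nat \<Rightarrow> 'a \<Rightarrow> 'a list set" where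
  "factorizations Y n z = {xs. length xs = n \<and> set xs \<subseteq> Y \<and> foldr (\<otimes>) xs \<one> = z}"

lemma finite_factorizations:
  assumes "Y \<subseteq> carrier G"
  shows "finite (factorizations Y n z)"
proof -
  have "factorizations Y n z \<subseteq> {xs. set xs \<subseteq> Y \<and> length xs = n}"
    unfolding factorizations_def by blast
  moreover have "finite Y"
    using assms finite_carrier finite_subset by blast
  ultimately show ?thesis
    using finite_lists_length_eq finite_subset by blast
qed

lemma foldr_mult_closed: "set xs \<subseteq> carrier G \<Longrightarrow> foldr (\<otimes>) xs \<one> \<in> carrier G"
  by (induction xs) auto

lemma factorizations_Suc:
  assumes Y: "Y \<subseteq> carrier G" and z: "z \<in> carrier G"
  shows "factorizations Y (Suc n) z = (\<Union>x\<in>Y. (#) x ` factorizations Y n (inv x \<otimes> z))"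
proof (intro equalityI subsetI)
  fix xs assume "xs \<in> factorizations Y (Suc n) z"
  then obtain x ys where xs: "xs = x # ys" "length ys = n" "x \<in> Y" "set ys \<subseteq> Y"
      and prod: "x \<otimes> foldr (\<otimes>) ys \<one> = z"
    unfolding factorizations_def by (auto simp: length_Suc_conv)
  have "x \<in> carrier G" "foldr (\<otimes>) ys \<one> \<in> carrier G"
    using xs Y foldr_mult_closed by auto
  then have "foldr (\<otimes>) ys \<one> = inv x \<otimes> z"
    using prod by (auto simp: m_assoc[symmetric])
  then show "xs \<in> (\<Union>x\<in>Y. (#) x ` factorizations Y n (inv x \<otimes> z))"
    using xs unfolding factorizations_def by blast
next
  fix xs assume "xs \<in> (\<Union>x\<in>Y. (#) x ` factorizations Y n (inv x \<otimes> z))"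
  then obtain x ys where xs: "xs = x # ys" "x \<in> Y" "ys \<in> factorizations Y n (inv x \<otimes> z)"
    by blast
  moreover have "x \<otimes> (inv x \<otimes> z) = z"
    using xs(2) Y z by (auto simp: m_assoc[symmetric])
  ultimately show "xs \<in> factorizations Y (Suc n) z"
    unfolding factorizations_def by auto
qed

lemma gr_mult_power_set_elem:
  assumes Y: "Y \<subseteq> carrier G"
  shows "z \<in> carrier G \<Longrightarrow> (gr_mult G (set_elem Y) ^^ n) (set_elem {\<one>}) z = int (card (factorizations Y n z))"
proof (induction n arbitrary: z)
  case 0
  have "factorizations Y 0 z = (if z = \<one> then {[]} else {})"
    unfolding factorizations_def by auto
  then show ?case
    by (simp add: set_elem_def)
next
  case (Suc n)
  have finite_Y: "finite Y"
    using Y finite_subset finite_carrier by blast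
  have "(gr_mult G (set_elem Y) ^^ Suc n) (set_elem {\<one>}) z
      = (\<Sum>x\<in>Y. int (card (factorizations Y n (inv x \<otimes> z))))"
    using Suc Y by (simp add: gr_mult_set_elem subset_eq)
  also have "\<dots> = int (\<Sum>x\<in>Y. card ((#) x ` factorizations Y n (inv x \<otimes> z)))"
    by (simp add: card_image)
  also have "(\<Sum>x\<in>Y. card ((#) x ` factorizations Y n (inv x \<otimes> z)))
      = card (\<Union>x\<in>Y. (#) x ` factorizations Y n (inv x \<otimes> z))"
    by (rule card_UN_disjoint[symmetric]) (use finite_Y finite_factorizations[OF Y] in auto)
  finally show ?case
    using factorizations_Suc[OF Y Suc.prems] by simp
qed

lemma foldr_mult_replicate: "a \<in> carrier G \<Longrightarrow> foldr (\<otimes>) (replicate n a) \<one> = a [^] n"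
  by (induction n) (simp_all, metis nat_pow_Suc nat_pow_Suc2)

lemma factorizations_rotate1_fixed:
  assumes "Y \<subseteq> carrier G" "0 < n"
  shows "{xs \<in> factorizations Y n z. rotate1 xs = xs} = (\<lambda>a. replicate n a) ` {a\<in>Y. a [^] n = z}"
proof (intro equalityI subsetI)
  fix xs assume xs: "xs \<in> {xs \<in> factorizations Y n z. rotate1 xs = xs}"
  define a where "a = hd xs"
  have rep: "xs = replicate n a" and "xs \<noteq> []" and "set xs \<subseteq> Y"
    using xs rotate1_fixed_replicate assms(2) unfolding factorizations_def a_def by fastforce+
  then have "a \<in> Y"
    unfolding a_def using hd_in_set by blast
  moreover have "a [^] n = z"
    using xs rep foldr_mult_replicate \<open>a \<in> Y\<close> assms(1) unfolding factorizations_def by auto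
  ultimately show "xs \<in> (\<lambda>a. replicate n a) ` {a\<in>Y. a [^] n = z}"
    using rep by blast
next
  fix xs assume "xs \<in> (\<lambda>a. replicate n a) ` {a\<in>Y. a [^] n = z}"
  then obtain a where "a \<in> Y" "a [^] n = z" "xs = replicate n a"
    by blast
  then show "xs \<in> {xs \<in> factorizations Y n z. rotate1 xs = xs}"
    unfolding factorizations_def using foldr_mult_replicate assms(1) by auto
qed

lemma zspan_gr_mult_power: "f \<in> zspan S \<Longrightarrow> (gr_mult G f ^^ n) (set_elem {\<one>}) \<in> zspan S"
  using A_set_basic_set[OF basic_set_one] zspan_mult_closed
  by (induction n) (simp_all add: A_set_def)

end

locale abelian_S_ring = comm_group G + S_ring G S
  for G :: "('a, 'b) monoid_scheme" (structure) and S
begin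

lemma foldr_mult_rotate1: "set xs \<subseteq> carrier G \<Longrightarrow> foldr (\<otimes>) (rotate1 xs) \<one> = foldr (\<otimes>) xs \<one>"
proof (induction xs)
  case (Cons x xs)
  have "foldr (\<otimes>) xs \<one> \<otimes> x = foldr (\<otimes>) (xs @ [x]) \<one>"
    using Cons.prems by (induction xs) (auto simp: m_assoc)
  then show ?case
    using Cons.prems foldr_mult_closed[of xs] by (simp add: m_comm)
qed simp

text \<open>The group ring congruence Y^q = Y^(q) modulo q: rotation acts on the q-term
  factorizations of z, and its fixed points are the constant words.\<close>

lemma card_factorizations_mod_prime:
  assumes q: "Factorial_Ring.prime q" and Y: "Y \<subseteq> carrier G"
  shows "card (factorizations Y q z) mod q = card {a\<in>Y. a [^] q = z} mod q"
proof -
  let ?T = "factorizations Y q z"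
  have "rotate1 xs \<in> ?T" if "xs \<in> ?T" for xs
    using that Y foldr_mult_rotate1 unfolding factorizations_def by auto
  then have "card ?T mod q = card {xs\<in>?T. rotate1 xs = xs} mod q"
    using card_mod_prime_rotation_fixed_points[OF q finite_factorizations[OF Y]]
    unfolding factorizations_def by blast
  moreover have "inj_on (\<lambda>a. replicate q a) {a\<in>Y. a [^] q = z}"
    using q prime_gt_0_nat by (intro inj_onI) simp
  ultimately show ?thesis
    using factorizations_rotate1_fixed[OF Y prime_gt_0_nat[OF q]] by (simp add: card_image)
qed

text \<open>Schur's theorem on multipliers, for a prime multiplier q: modulo q the q-th power
  of Y has coefficient 1 on the q-th powers of the elements of Y and 0 elsewhere.\<close>

lemma A_set_pow_image_prime:
  assumes q: "Factorial_Ring.prime q" "coprime q (order G)" and Y: "A_set G S Y"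
  shows "A_set G S ((\<lambda>x. x [^] q) ` Y)"
proof -
  have Yc: "Y \<subseteq> carrier G"
    using Y unfolding A_set_def by simp
  define f where "f = (gr_mult G (set_elem Y) ^^ q) (set_elem {\<one>})"
  have "f \<in> zspan S"
    unfolding f_def using Y zspan_gr_mult_power unfolding A_set_def by blast
  have level: "z \<in> (\<lambda>x. x [^] q) ` Y \<longleftrightarrow> f z mod int q \<noteq> 0" if z: "z \<in> carrier G" for z
  proof -
    let ?R = "{a\<in>Y. a [^] q = z}"
    have "inj_on (\<lambda>x. x [^] q) Y"
      using pow_eq_imp_eq_coprime[OF finite_carrier prime_gt_0_nat[OF q(1)] q(2)] Yc
      by (intro inj_onI) blast
    moreover have "finite ?R"
      using Yc by (auto intro: finite_subset[OF _ finite_carrier])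
    ultimately have "card ?R \<le> 1"
      unfolding One_nat_def card_le_Suc0_iff_eq[OF \<open>finite ?R\<close>] by (auto dest: inj_onD)
    moreover have "f z mod int q = int (card ?R mod q)"
      using card_factorizations_mod_prime[OF q(1) Yc] gr_mult_power_set_elem[OF Yc z]
      unfolding f_def by (simp flip: of_nat_mod)
    moreover have "q > 1"
      using q(1) prime_gt_1_nat by blast
    ultimately have "card ?R = 0 \<or> card ?R = 1"
      by linarith
    then have "card ?R mod q \<noteq> 0 \<longleftrightarrow> card ?R \<noteq> 0"
      using \<open>q > 1\<close> by auto
    also have "\<dots> \<longleftrightarrow> ?R \<noteq> {}"
      using card_0_eq[OF \<open>finite ?R\<close>] by (simp only:)
    finally have "card ?R mod q \<noteq> 0 \<longleftrightarrow> ?R \<noteq> {}" .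
    then have "f z mod int q \<noteq> 0 \<longleftrightarrow> ?R \<noteq> {}"
      using \<open>f z mod int q = int (card ?R mod q)\<close> by simp
    then show ?thesis
      by (auto simp: image_iff)
  qed
  have "(\<lambda>x. x [^] q) ` Y \<subseteq> carrier G"
    using Yc by auto
  from A_set_level_set[OF \<open>f \<in> zspan S\<close> this level] show ?thesis .
qed

lemma A_set_pow_image:
  assumes "0 < m" "coprime m (order G)" and Y: "A_set G S Y"
  shows "A_set G S ((\<lambda>x. x [^] m) ` Y)"
  using assms(1,2)
proof (induction m rule: prime_divisors_induct)
  case (unit m)
  then have "(\<lambda>x. x [^] m) ` Y = (\<lambda>x. x) ` Y"
    using Y unfolding A_set_def by (intro image_cong) auto
  then show ?case
    using Y by simp
next
  case (factor q m)
  have "(\<lambda>x. x [^] (q * m)) ` Y = (\<lambda>x. x [^] q) ` (\<lambda>x. x [^] m) ` Y"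
    using Y unfolding A_set_def image_image by (intro image_cong) (auto simp: nat_pow_pow mult.commute)
  then show ?case
    using factor A_set_pow_image_prime by simp
qed simp

lemma basic_set_pow_image:
  assumes Y: "Y \<in> S" and m: "0 < m" "coprime m (order G)"
  shows "(\<lambda>x. x [^] m) ` Y \<in> S"
proof -
  obtain u where u: "0 < u" "coprime u (order G)" "\<And>x. x \<in> carrier G \<Longrightarrow> (x [^] m) [^] u = x"
    using pow_inverse_exponent[OF finite_carrier m] by blast
  have Yc: "Y \<subseteq> carrier G"
    using basic_set_subset[OF Y] .
  obtain y where y: "y \<in> Y"
    using basic_set_nonempty[OF Y] by blast
  then obtain A where A: "A \<in> S" "y [^] m \<in> A"
    using basic_set_cover Yc by blast
  have Ac: "A \<subseteq> carrier G"
    using basic_set_subset[OF A(1)] .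
  have "A \<subseteq> (\<lambda>x. x [^] m) ` Y"
    using basic_set_subset_A_set[OF A_set_pow_image[OF m A_set_basic_set[OF Y]] A] y by blast
  have "Y \<subseteq> (\<lambda>x. x [^] u) ` A"
  proof (rule basic_set_subset_A_set[OF A_set_pow_image[OF u(1,2) A_set_basic_set[OF A(1)]] Y y])
    show "y \<in> (\<lambda>x. x [^] u) ` A"
      using A(2) u(3) y Yc by (metis image_eqI subsetD)
  qed
  then have "(\<lambda>x. x [^] m) ` Y \<subseteq> (\<lambda>x. (x [^] u) [^] m) ` A"
    by auto
  also have "\<dots> = A"
    using Ac u(3) by (auto simp: nat_pow_pow mult.commute subset_iff image_iff)
  finally have "(\<lambda>x. x [^] m) ` Y = A"
    using \<open>A \<subseteq> (\<lambda>x. x [^] m) ` Y\<close> by blast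
  then show ?thesis
    using A(1) by simp
qed

lemma stab_subset_stab_pow_image:
  assumes Q: "Q \<subseteq> carrier G" and m: "0 < m" "coprime m (order G)"
  shows "stab Q \<subseteq> stab ((\<lambda>x. x [^] m) ` Q)"
proof
  fix r assume r: "r \<in> stab Q"
  obtain u where "0 < u" "coprime u (order G)" and u: "\<And>x. x \<in> carrier G \<Longrightarrow> (x [^] m) [^] u = x"
    using pow_inverse_exponent[OF finite_carrier m] by blast
  have rc: "r \<in> carrier G"
    using r unfolding stab_def by blast
  have ru: "r [^] u \<in> stab Q"
    by (rule subgroup_nat_pow_closed[OF stab_subgroup[OF Q] r])
  have "(r [^] u) [^] m = r"
    using u[OF rc] rc by (simp add: nat_pow_pow mult.commute)
  then have "x [^] m \<otimes> r = (x \<otimes> r [^] u) [^] m" if "x \<in> Q" for x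
    using that Q rc by (simp add: pow_mult_distrib m_comm subset_iff)
  moreover have "x \<otimes> r [^] u \<in> Q" if "x \<in> Q" for x
    using that ru unfolding stab_def by blast
  ultimately show "r \<in> stab ((\<lambda>x. x [^] m) ` Q)"
    unfolding stab_def using rc by auto
qed

lemma rad_eq_stab:
  assumes "Q \<subseteq> carrier G" "H \<subseteq> carrier G"
  shows "rad G H Q = H \<inter> stab Q"
proof -
  have "z <# Q = Q #> z" if "z \<in> carrier G" for z
    using assms(1) that unfolding l_coset_def r_coset_def by (auto simp: m_comm subset_iff)
  then show ?thesis
    unfolding rad_def using r_coset_eq_iff_stab[OF assms(1)] assms(2) stab_def by auto
qed

lemma A_section_if_A_subgroups:
  assumes "subgroup U G" "A_set G S U" "subgroup L G" "A_set G S L" "L \<subseteq> U"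
  shows "A_section G S U L"
proof -
  have "comm_group (G\<lparr>carrier := U\<rparr>)"
    by (rule group.group_comm_groupI[OF subgroup_imp_group[OF assms(1)]])
      (use m_comm subgroup.mem_carrier[OF assms(1)] in auto)
  moreover have "subgroup L (G\<lparr>carrier := U\<rparr>)"
    using subgroup_incl[OF assms(3,1,5)] .
  ultimately have "L \<lhd> G\<lparr>carrier := U\<rparr>"
    by (rule comm_group.subgroup_imp_normal)
  then show ?thesis
    unfolding A_section_def A_subgroup_def using assms by blast
qed

lemma wreath_if_stab:
  assumes "subgroup L G" "\<And>A. A \<in> S \<Longrightarrow> \<not> A \<subseteq> U \<Longrightarrow> L \<subseteq> stab A"
  shows "wreath G S U L"
  unfolding wreath_def
proof (intro conjI ballI impI)
  show "L \<lhd> G"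
    using subgroup_imp_normal[OF assms(1)] .
  fix A assume "A \<in> S" "\<not> A \<subseteq> U"
  then show "L \<subseteq> rad G (carrier G) A"
    using assms(2) rad_eq_stab[OF basic_set_subset subset_refl] subgroup.subset[OF assms(1)] by simp
qed

end

locale cyclic_p_group = group G for G :: "('a, 'b) monoid_scheme" (structure) +
  fixes g :: 'a and p k :: nat
  assumes generator: "g \<in> carrier G" and generate_generator: "generate G {g} = carrier G"
    and prime: "Factorial_Ring.prime p" and card_carrier: "card (carrier G) = p ^ k"
begin

lemma finite_carrier: "finite (carrier G)"
proof (rule card_ge_0_finite)
  show "card (carrier G) > 0"
    using card_carrier prime_gt_0_nat[OF prime] by simp
qed

lemma order_eq: "order G = p ^ k"
  unfolding order_def by (rule card_carrier)

lemma exists_pow_generator: "x \<in> carrier G \<Longrightarrow> \<exists>i::nat. x = g [^] i"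
  using generate_generator generate_pow_on_finite_carrier[OF finite_carrier generator] by blast

sublocale comm_group
proof (rule group_comm_groupI)
  fix x y assume "x \<in> carrier G" "y \<in> carrier G"
  then obtain i j :: nat where "x = g [^] i" "y = g [^] j"
    using exists_pow_generator by blast
  then show "x \<otimes> y = y \<otimes> x"
    using generator by (metis add.commute nat_pow_mult)
qed

text \<open>All cyclic subgroups are of the form generated by g^(p^i), so they form a chain.\<close>

lemma generate_singleton_chain:
  assumes "x \<in> carrier G" "y \<in> carrier G"
  shows "generate G {x} \<subseteq> generate G {y} \<or> generate G {y} \<subseteq> generate G {x}"
proof -
  obtain i j :: nat where ij: "x = g [^] i" "y = g [^] j"
    using exists_pow_generator assms by blast
  let ?d = "gcd (order G) i" and ?e = "gcd (order G) j"
  have "?d dvd p ^ k" "?e dvd p ^ k"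
    by (simp_all flip: order_eq)
  then obtain a b where "?d = p ^ a" "?e = p ^ b"
    using divides_primepow_nat[OF prime] by blast
  then have "?d dvd ?e \<or> ?e dvd ?d"
    by (cases "a \<le> b") (simp_all add: le_imp_power_dvd)
  moreover have "generate G {x} = generate G {g [^] ?d}" "generate G {y} = generate G {g [^] ?e}"
    unfolding ij by (rule generate_pow_gcd[OF finite_carrier generator])+
  ultimately show ?thesis
    using generate_pow_mono[OF generator, of ?d ?e] generate_pow_mono[OF generator, of ?e ?d] by argo
qed

lemma exists_generating_element:
  assumes "V \<subseteq> carrier G" "V \<noteq> {}"
  shows "\<exists>v\<in>V. V \<subseteq> generate G {v}"
proof -
  have "finite V"
    using finite_subset[OF assms(1) finite_carrier] .
  then show ?thesis
    using assms(2,1)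
  proof (induction rule: finite_ne_induct)
    case (singleton x)
    have "x \<in> generate G {x}"
      by (rule generate.incl) simp
    then show ?case
      by simp
  next
    case (insert x F)
    then obtain v where v: "v \<in> F" "F \<subseteq> generate G {v}"
      by auto
    have "x \<in> generate G {x}" "v \<in> generate G {v}"
      by (auto intro: generate.incl)
    then show ?case
      using generate_singleton_chain[of x v] insert.prems v by blast
  qed
qed

lemma subgroup_cyclic:
  assumes "subgroup H G"
  shows "\<exists>h\<in>H. generate G {h} = H"
  using exists_generating_element[OF subgroup.subset[OF assms]] subgroup.one_closed[OF assms]
    generate_subgroup_incl[OF _ assms] by blast

lemma subgroup_chain:
  assumes "subgroup H G" "subgroup K G"
  shows "H \<subseteq> K \<or> K \<subseteq> H"
  using subgroup_cyclic[OF assms(1)] subgroup_cyclic[OF assms(2)] generate_singleton_chain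
    subgroup.mem_carrier assms by metis

lemma generate_ne_subgroup:
  assumes H: "subgroup H G" and V: "V \<subseteq> H" "V \<noteq> {}"
    and non_generators: "\<And>v. v \<in> V \<Longrightarrow> generate G {v} \<noteq> H"
  shows "generate G V \<noteq> H"
proof -
  have "V \<subseteq> carrier G"
    using V(1) subgroup.subset[OF H] by (rule subset_trans)
  then obtain v where v: "v \<in> V" "V \<subseteq> generate G {v}"
    using exists_generating_element V(2) by blast
  then have "{v} \<subseteq> carrier G" "{v} \<subseteq> H"
    using V(1) \<open>V \<subseteq> carrier G\<close> by auto
  then have "generate G V \<subseteq> generate G {v}" "generate G {v} \<subseteq> H"
    using generate_subgroup_incl[OF v(2) generate_is_subgroup] generate_subgroup_incl[OF _ H] by auto
  then show ?thesis
    using non_generators[OF v(1)] by blast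
qed

lemma generators_pow_coprime:
  assumes H: "subgroup H G" and x: "x \<in> H" "generate G {x} = H" and y: "y \<in> H" "generate G {y} = H"
  obtains m where "0 < m" "coprime m (order G)" "y = x [^] m"
proof (cases "H = {\<one>}")
  case True
  then show ?thesis
    using that[of 1] x y by simp
next
  case False
  have xc: "x \<in> carrier G" and yc: "y \<in> carrier G"
    using x y subgroup.mem_carrier[OF H] by auto
  obtain m where m: "y = x [^] (m::nat)"
    using y x generate_pow_on_finite_carrier[OF finite_carrier xc] by auto
  have "ord x = card H" "ord y = card H"
    using generate_pow_card xc yc x y by auto
  then have "coprime m (ord x)"
    using pow_ord_eq_ord_iff[OF finite_carrier xc] m by simp
  moreover obtain i where i: "card H = p ^ i"
    using lagrange_finite[OF finite_carrier H] order_eq divides_primepow_nat[OF prime] by (metis dvd_triv_right)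
  moreover have "card H \<noteq> 1"
    using False subgroup.one_closed[OF H] by (metis card_1_singletonE singletonD)
  ultimately have "coprime m p"
    using \<open>ord x = card H\<close> by (metis coprime_commute coprime_power_right_iff power_0 neq0_conv)
  then have "coprime m (order G)"
    using order_eq by simp
  moreover have "m \<noteq> 0"
    using \<open>coprime m p\<close> prime by (metis coprime_0_left_iff not_prime_unit)
  ultimately show ?thesis
    using that m by blast
qed

end

locale cyclic_p_S_ring = cyclic_p_group G g p k + S_ring G S
  for G :: "('a, 'b) monoid_scheme" (structure) and g p k S

sublocale cyclic_p_S_ring \<subseteq> abelian_S_ring
  by unfold_locales

context cyclic_p_S_ring
begin

lemma stab_eq_if_generating_basic_sets:
  assumes H: "subgroup H G"
    and Q: "Q \<in> S" "x \<in> Q" "x \<in> H" "generate G {x} = H"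
    and Y: "Y \<in> S" "y \<in> Y" "y \<in> H" "generate G {y} = H"
  shows "stab Q = stab Y"
proof -
  have "stab Q \<subseteq> stab Y"
    if gen: "Q \<in> S" "x \<in> Q" "x \<in> H" "generate G {x} = H" "Y \<in> S" "y \<in> Y" "y \<in> H" "generate G {y} = H"
    for Q Y x y
  proof -
    obtain m where m: "0 < m" "coprime m (order G)" "y = x [^] m"
      using generators_pow_coprime[OF H gen(3,4) gen(7,8)] by blast
    have "y \<in> (\<lambda>x. x [^] m) ` Q"
      using gen(2) m(3) by blast
    then have "(\<lambda>x. x [^] m) ` Q = Y"
      using basic_sets_disjoint[OF basic_set_pow_image[OF gen(1) m(1,2)] gen(5) _ gen(6)] by blast
    then show ?thesis
      using stab_subset_stab_pow_image[OF basic_set_subset[OF gen(1)] m(1,2)] by simp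
  qed
  then show ?thesis
    using Q Y by (intro equalityI)
qed

lemma rad_Sring_eq_stab:
  assumes H: "subgroup H G" and Q: "Q \<in> S" "Q \<subseteq> H" "x \<in> Q" "generate G {x} = H"
  shows "rad_Sring G H (restr S H) = H \<inter> stab Q"
proof -
  define Q' where "Q' = (SOME A. A \<in> restr S H \<and> (\<exists>x\<in>A. generate G {x} = H))"
  have "Q' \<in> restr S H \<and> (\<exists>x\<in>Q'. generate G {x} = H)"
    unfolding Q'_def by (rule someI[of _ Q]) (use Q in \<open>auto simp: restr_def\<close>)
  then obtain x' where Q': "Q' \<in> S" "Q' \<subseteq> H" "x' \<in> Q'" "generate G {x'} = H"
    unfolding restr_def by blast
  have "rad_Sring G H (restr S H) = rad G H Q'"
    unfolding rad_Sring_def Q'_def ..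
  also have "\<dots> = H \<inter> stab Q'"
    by (rule rad_eq_stab[OF basic_set_subset[OF Q'(1)] subgroup.subset[OF H]])
  also have "stab Q' = stab Q"
    using Q' Q by (intro stab_eq_if_generating_basic_sets[OF H Q'(1,3) _ Q'(4) Q(1,3) _ Q(4)]) auto
  finally show ?thesis .
qed

lemma exists_generating_basic_set:
  assumes H: "subgroup H G" "A_set G S H"
  obtains Q x where "Q \<in> S" "Q \<subseteq> H" "x \<in> Q" "generate G {x} = H"
proof -
  obtain x where x: "x \<in> H" "generate G {x} = H"
    using subgroup_cyclic[OF H(1)] by blast
  then obtain Q where "Q \<in> S" "x \<in> Q"
    using basic_set_cover subgroup.mem_carrier[OF H(1)] by blast
  then show ?thesis
    using that basic_set_subset_A_set[OF H(2)] x by blast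
qed

lemma rad_Sring_A_subgroup:
  assumes H: "subgroup H G" "A_set G S H"
  shows "subgroup (rad_Sring G H (restr S H)) G" "A_set G S (rad_Sring G H (restr S H))"
    "rad_Sring G H (restr S H) \<subseteq> H"
proof -
  obtain Q x where Q: "Q \<in> S" "Q \<subseteq> H" "x \<in> Q" "generate G {x} = H"
    using exists_generating_basic_set[OF H] .
  show "subgroup (rad_Sring G H (restr S H)) G"
    unfolding rad_Sring_eq_stab[OF H(1) Q]
    by (rule subgroups_Inter_pair[OF H(1) stab_subgroup[OF basic_set_subset[OF Q(1)]]])
  show "A_set G S (rad_Sring G H (restr S H))"
    unfolding rad_Sring_eq_stab[OF H(1) Q]
    by (rule A_set_Int[OF H(2) A_set_stab[OF A_set_basic_set[OF Q(1)]]])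
  show "rad_Sring G H (restr S H) \<subseteq> H"
    unfolding rad_Sring_eq_stab[OF H(1) Q] by blast
qed

lemma generate_non_generators_A_subgroup:
  assumes H: "subgroup H G" and V: "A_set G S V" "V \<subseteq> H" "V \<noteq> {}"
    and non_generators: "\<And>v. v \<in> V \<Longrightarrow> generate G {v} \<noteq> H"
  shows "subgroup (generate G V) G" "A_set G S (generate G V)" "V \<subseteq> generate G V"
    "generate G V \<subset> H"
proof -
  have "V \<subseteq> carrier G"
    using V(2) subgroup.subset[OF H] by (rule subset_trans)
  then show "subgroup (generate G V) G"
    by (rule generate_is_subgroup)
  show "A_set G S (generate G V)"
    by (rule A_set_generate[OF V(1)])
  show "V \<subseteq> generate G V"
    by (auto intro: generate.incl)
  have "generate G V \<noteq> H"
    by (rule generate_ne_subgroup[OF H V(2,3) non_generators])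
  moreover have "generate G V \<subseteq> H"
    by (rule generate_subgroup_incl[OF V(2) H])
  ultimately show "generate G V \<subset> H"
    by blast
qed

text \<open>A generator of H in the radical would make H itself stabilize a basic set
  containing a generator, which then contains the identity and so equals {1}.\<close>

lemma rad_Sring_non_generator:
  assumes H: "subgroup H G" "A_set G S H" "H \<noteq> {\<one>}" and r: "r \<in> rad_Sring G H (restr S H)"
  shows "generate G {r} \<noteq> H"
proof
  assume generates: "generate G {r} = H"
  obtain Q x where Q: "Q \<in> S" "Q \<subseteq> H" "x \<in> Q" "generate G {x} = H"
    using exists_generating_basic_set[OF H(1,2)] .
  have "r \<in> stab Q"
    using r rad_Sring_eq_stab[OF H(1) Q] by blast
  then have "H \<subseteq> stab Q"
    unfolding generates[symmetric]
    by (intro generate_subgroup_incl[OF _ stab_subgroup[OF basic_set_subset[OF Q(1)]]]) auto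
  then have "x \<otimes> inv x \<in> Q"
    using Q(2,3) subgroup.m_inv_closed[OF H(1)] unfolding stab_def by blast
  then have "\<one> \<in> Q"
    using Q(2,3) subgroup.mem_carrier[OF H(1)] by auto
  then have "Q = {\<one>}"
    using basic_sets_disjoint[OF Q(1) basic_set_one] by blast
  then show False
    using Q(3,4) H(3) generate_one by simp
qed

lemma non_generator_if_not_rad_invariant:
  assumes H: "subgroup H G" "A_set G S H"
    and A: "A \<in> S" "A \<subseteq> H" "\<not> rad_Sring G H (restr S H) \<subseteq> stab A" "v \<in> A"
  shows "generate G {v} \<noteq> H"
proof
  assume generates: "generate G {v} = H"
  obtain Q x where Q: "Q \<in> S" "Q \<subseteq> H" "x \<in> Q" "generate G {x} = H"
    using exists_generating_basic_set[OF H] .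
  have "stab Q = stab A"
    using stab_eq_if_generating_basic_sets[OF H(1) Q(1,3) _ Q(4) A(1,4) _ generates] Q(2,3) A(2,4)
    by blast
  then show False
    using A(3) rad_Sring_eq_stab[OF H(1) Q] by blast
qed

lemma exists_wreath_subgroup_over_rad:
  assumes H: "subgroup H G" "A_set G S H" and R: "R = rad_Sring G H (restr S H)" "R \<noteq> {\<one>}"
  obtains U where "subgroup U G" "A_set G S U" "R \<subseteq> U" "U \<subset> H"
    "\<And>A. A \<in> S \<Longrightarrow> A \<subseteq> H \<Longrightarrow> \<not> A \<subseteq> U \<Longrightarrow> R \<subseteq> stab A"
proof -
  have R_A_subgroup: "subgroup R G" "A_set G S R" "R \<subseteq> H"
    using rad_Sring_A_subgroup[OF H] R(1) by simp_all
  then have "H \<noteq> {\<one>}" "R \<noteq> {}"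
    using R(2) subgroup.one_closed by blast+
  define V where "V = \<Union>{A \<in> S. A \<subseteq> H \<and> \<not> R \<subseteq> stab A} \<union> R"
  have "A_set G S V"
    unfolding V_def by (intro A_set_Un[OF A_set_Union R_A_subgroup(2)]) (auto intro: A_set_basic_set)
  moreover have "V \<subseteq> H" "V \<noteq> {}"
    using R_A_subgroup(3) \<open>R \<noteq> {}\<close> unfolding V_def by blast+
  moreover have "generate G {v} \<noteq> H" if "v \<in> V" for v
    using that rad_Sring_non_generator[OF H \<open>H \<noteq> {\<one>}\<close>] non_generator_if_not_rad_invariant[OF H]
    unfolding V_def R(1) by blast
  ultimately have U: "subgroup (generate G V) G" "A_set G S (generate G V)" "V \<subseteq> generate G V"
      "generate G V \<subset> H"
    using generate_non_generators_A_subgroup[OF H(1)] by blast+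
  show ?thesis
  proof (rule that[OF U(1,2) _ U(4)])
    show "R \<subseteq> generate G V"
      using U(3) unfolding V_def by blast
    fix A assume "A \<in> S" "A \<subseteq> H" "\<not> A \<subseteq> generate G V"
    then show "R \<subseteq> stab A"
      using U(3) unfolding V_def by blast
  qed
qed

definition trivial_rad_wreath_section :: "'a set \<Rightarrow> 'a set \<Rightarrow> 'a set \<Rightarrow> bool" where
  "trivial_rad_wreath_section H U L \<longleftrightarrow>
     subgroup U G \<and> A_set G S U \<and> subgroup L G \<and> A_set G S L \<and> L \<subseteq> U \<and> U \<subset> H \<and>
     L \<noteq> {\<one>} \<and> (\<forall>A\<in>S. A \<subseteq> H \<longrightarrow> \<not> A \<subseteq> U \<longrightarrow> L \<subseteq> stab A) \<and>
     rad_Sring G U (restr S U) = {\<one>}"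

text \<open>By the chain property R \<inter> L' is the smaller of R and L', hence nontrivial, and it
  stabilizes the basic sets outside U' both inside and outside U.\<close>

lemma trivial_rad_wreath_section_descend:
  assumes R: "subgroup R G" "A_set G S R" "R \<noteq> {\<one>}" and U: "U \<subset> H"
    and outside: "\<And>A. A \<in> S \<Longrightarrow> A \<subseteq> H \<Longrightarrow> \<not> A \<subseteq> U \<Longrightarrow> R \<subseteq> stab A"
    and "trivial_rad_wreath_section U U' L'"
  shows "trivial_rad_wreath_section H U' (R \<inter> L')"
proof -
  have U': "subgroup U' G" "A_set G S U'" "subgroup L' G" "A_set G S L'" "L' \<subseteq> U'" "U' \<subset> U"
      "L' \<noteq> {\<one>}" "\<forall>A\<in>S. A \<subseteq> U \<longrightarrow> \<not> A \<subseteq> U' \<longrightarrow> L' \<subseteq> stab A"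
      "rad_Sring G U' (restr S U') = {\<one>}"
    using assms(6) by (simp_all add: trivial_rad_wreath_section_def)
  have "R \<inter> L' = R \<or> R \<inter> L' = L'"
    using subgroup_chain[OF R(1) U'(3)] by blast
  then have "R \<inter> L' \<noteq> {\<one>}"
    using R(3) U'(7) by metis
  moreover have "R \<inter> L' \<subseteq> stab A" if "A \<in> S" "A \<subseteq> H" "\<not> A \<subseteq> U'" for A
    using U'(8) outside that by (cases "A \<subseteq> U") blast+
  moreover have "U' \<subset> H"
    using U U'(6) by (rule psubset_trans[rotated])
  ultimately show ?thesis
    unfolding trivial_rad_wreath_section_def
    using U'(1,2,5,9) subgroups_Inter_pair[OF R(1) U'(3)] A_set_Int[OF R(2) U'(4)] by blast
qed

lemma exists_trivial_rad_wreath_section: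
  "subgroup H G \<Longrightarrow> A_set G S H \<Longrightarrow> rad_Sring G H (restr S H) \<noteq> {\<one>} \<Longrightarrow>
    \<exists>U L. trivial_rad_wreath_section H U L"
proof (induction "card H" arbitrary: H rule: less_induct)
  case less
  define R where "R = rad_Sring G H (restr S H)"
  have R: "subgroup R G" "A_set G S R" "R \<noteq> {\<one>}"
    using rad_Sring_A_subgroup[OF less.prems(1,2)] less.prems(3) unfolding R_def by simp_all
  obtain U where U: "subgroup U G" "A_set G S U" "R \<subseteq> U" "U \<subset> H"
      and outside: "\<And>A. A \<in> S \<Longrightarrow> A \<subseteq> H \<Longrightarrow> \<not> A \<subseteq> U \<Longrightarrow> R \<subseteq> stab A"
    using exists_wreath_subgroup_over_rad[OF less.prems(1,2) R_def R(3)] by blast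
  show ?case
  proof (cases "rad_Sring G U (restr S U) = {\<one>}")
    case True
    then have "trivial_rad_wreath_section H U R"
      unfolding trivial_rad_wreath_section_def using U R outside by simp
    then show ?thesis
      by blast
  next
    case False
    have "card U < card H"
      using psubset_card_mono[OF finite_subset[OF subgroup.subset[OF less.prems(1)] finite_carrier] U(4)] .
    then obtain U' L' where "trivial_rad_wreath_section U U' L'"
      using less.hyps U(1,2) False by blast
    then show ?thesis
      using trivial_rad_wreath_section_descend[OF R U(4) outside] by blast
  qed
qed

lemma exists_proper_wreath_section:
  assumes "rad_Sring G (carrier G) S \<noteq> {\<one>}"
  shows "\<exists>U L. A_section G S U L \<and> proper_wreath G S U L \<and> rad_Sring G U (restr S U) = {\<one>}"
proof -
  have "restr S (carrier G) = S"
    unfolding restr_def using basic_set_subset by blast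
  then obtain U L where "trivial_rad_wreath_section (carrier G) U L"
    using exists_trivial_rad_wreath_section[OF subgroup_self A_set_carrier] assms by auto
  then have UL: "subgroup U G" "A_set G S U" "subgroup L G" "A_set G S L" "L \<subseteq> U"
      "U \<subset> carrier G" "L \<noteq> {\<one>}" "\<forall>A\<in>S. A \<subseteq> carrier G \<longrightarrow> \<not> A \<subseteq> U \<longrightarrow> L \<subseteq> stab A"
      "rad_Sring G U (restr S U) = {\<one>}"
    by (simp_all add: trivial_rad_wreath_section_def)
  have "wreath G S U L"
    using UL(8) basic_set_subset by (intro wreath_if_stab[OF UL(3)]) blast
  then have "proper_wreath G S U L"
    unfolding proper_wreath_def using UL(6,7) by blast
  then show ?thesis
    using A_section_if_A_subgroups[OF UL(1-5)] UL(9) by blast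
qed

end

theorem lemma5p2:
  fixes G :: "('a, 'b) monoid_scheme" and S :: "'a set set" and p k :: nat
  assumes "group G" and "finite (carrier G)"
    and "Factorial_Ring.prime p" and "card (carrier G) = p ^ k"
    and "\<exists>g\<in>carrier G. generate G {g} = carrier G"
    and "is_Sring G S"
    and "rad_Sring G (carrier G) S \<noteq> {\<one>\<^bsub>G\<^esub>}"
  shows "\<exists>U L. A_section G S U L \<and> proper_wreath G S U L \<and>
           rad_Sring G U (restr S U) = {\<one>\<^bsub>G\<^esub>}"
proof -
  obtain g where "g \<in> carrier G" "generate G {g} = carrier G"
    using assms(5) by blast
  then interpret cyclic_p_S_ring G g p k S
    using assms unfolding cyclic_p_S_ring_def cyclic_p_group_def cyclic_p_group_axioms_def
      S_ring_def S_ring_axioms_def by blast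
  show ?thesis
    using exists_proper_wreath_section assms(7) by blast
qed

end
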